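(* Consider problem (P): $\min_{{\bf x}\in\mathbb{R}^n} f({\bf x})+\lambda\|(A{\bf x}+{\bf b})_+\|_0$. (i) Let ${\bf x}^*$ be a local minimizer of (P) such that $A_{\Gamma_*}$ has full row rank. Then ${\bf x}^*$ is a P-stationary point of (P) with $\tau$ for every $\tau$ with $0<\tau<\tau_*:=\min\{\tau_1,\tau_2\}$. (ii) If ${\bf x}^*$ is a P-stationary point of (P) with some $\tau>0$ and $f$ is convex on a neighbourhood of ${\bf x}^*$, then ${\bf x}^*$ is a local minimizer of (P). (iii) If $f$ is strongly convex with modulus $c_f>0$ (i.e. $f({\bf x})\ge f({\bf x}')+\langle\nabla f({\bf x}'),{\bf x}-{\bf x}'\rangle+\frac{c_f}{2}\|{\bf x}-{\bf x}'\|^2$ for all ${\bf x},{\bf x}'$) and ${\bf x}^*$ is a P-stationary point of (P) with some $\tau\ge\|A\|^2/c_f$, then ${\bf x}^*$ is a global minimizer of (P).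
   Context: Standing setting: $f:\mathbb{R}^n\to\mathbb{R}$ is twice continuously differentiable, $\lambda>0$, $A\in\mathbb{R}^{m\times n}$ with rows $A_i$, ${\bf b}\in\mathbb{R}^m$; ${\bf z}_+$ is the componentwise positive part, $\|{\bf z}\|_0$ the number of nonzero entries, $A_\Gamma$ the submatrix of rows indexed by $\Gamma$, $\|A\|$ the spectral norm. For $\alpha>0$, the (set-valued) proximal operator is $\mathrm{Prox}_{\alpha\|(\cdot)_+\|_0}({\bf z}):=\arg\min_{{\bf y}\in\mathbb{R}^m}\frac12\|{\bf y}-{\bf z}\|^2+\alpha\|{\bf y}_+\|_0$; componentwise its elements ${\bf p}$ satisfy $p_i=0$ if $|z_i-\sqrt{\alpha/2}|<\sqrt{\alpha/2}$, $p_i\in\{0,z_i\}$ if $|z_i-\sqrt{\alpha/2}|=\sqrt{\alpha/2}$, $p_i=z_i$ if $|z_i-\sqrt{\alpha/2}|>\sqrt{\alpha/2}$. P-stationarity: ${\bf x}^*$ is a P-stationary point of (P) with $\tau>0$ if there exists ${\bf z}^*\in\mathbb{R}^m$ with $\nabla f({\bf x}^* )+A^\top{\bf z}^*=0$ and $A{\bf x}^*+{\bf b}\in\mathrm{Prox}_{\tau\lambda\|(\cdot)_+\|_0}(A{\bf x}^*+{\bf b}+\tau{\bf z}^* )$. For ${\bf x}^*$: ${\bf y}^*:=A{\bf x}^*+{\bf b}$, $\Gamma_*:=\{i: y^*_i=0\}$; when $A_{\Gamma_*}$ has full row rank, ${\bf p}^*:=-(A_{\Gamma_*}A_{\Gamma_*}^\top)^{-1}A_{\Gamma_*}\nabla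 f({\bf x}^* )\in\mathbb{R}^{|\Gamma_*|}$. Define $\tau_1:=+\infty$ if ${\bf y}^*\le 0$, otherwise $\tau_1:=\min\{(y_i^* )^2/(2\lambda): y_i^*>0\}$; and $\tau_2:=+\infty$ if $\Gamma_*=\emptyset$ or ${\bf p}^*=0$, otherwise $\tau_2:=2\lambda/\max_i|p^*_i|^2$. *)

theory Defs
  imports "HOL-Analysis.Analysis"
begin

definition pos0 :: "real^'m \<Rightarrow> nat" where
  "pos0 z = card {i. z $ i > 0}"

definition Prox :: "real \<Rightarrow> real^'m \<Rightarrow> (real^'m) set" where
  "Prox \<alpha> z = {p. \<forall>y. (1/2) * (norm (p - z))\<^sup>2 + \<alpha> * real (pos0 p)
                     \<le> (1/2) * (norm (y - z))\<^sup>2 + \<alpha> * real (pos0 y)}"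

definition objP :: "(real^'n \<Rightarrow> real) \<Rightarrow> real \<Rightarrow> real^'n^'m \<Rightarrow> real^'m \<Rightarrow> real^'n \<Rightarrow> real" where
  "objP f lam A b x = f x + lam * real (pos0 (A *v x + b))"

text \<open>P-stationarity with parameter tau; g is the gradient of f.\<close>
definition Pstat :: "(real^'n \<Rightarrow> real^'n) \<Rightarrow> real \<Rightarrow> real^'n^'m \<Rightarrow> real^'m \<Rightarrow> real \<Rightarrow> real^'n \<Rightarrow> bool" where
  "Pstat g lam A b \<tau> x \<longleftrightarrow> (\<exists>z. g x + transpose A *v z = 0 \<and>
       A *v x + b \<in> Prox (\<tau> * lam) (A *v x + b + \<tau> *\<^sub>R z))"

definition local_minimizer :: "('a::metric_space \<Rightarrow> real) \<Rightarrow> 'a \<Rightarrow> bool" where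
  "local_minimizer F x \<longleftrightarrow> (\<exists>\<delta>>0. \<forall>y. dist y x < \<delta> \<longrightarrow> F x \<le> F y)"

definition global_minimizer :: "('a \<Rightarrow> real) \<Rightarrow> 'a \<Rightarrow> bool" where
  "global_minimizer F x \<longleftrightarrow> (\<forall>y. F x \<le> F y)"

definition Gam :: "real^'n^'m \<Rightarrow> real^'m \<Rightarrow> real^'n \<Rightarrow> 'm set" where
  "Gam A b x = {i. (A *v x + b) $ i = 0}"

definition full_row_rank_on :: "real^'n^'m \<Rightarrow> 'm set \<Rightarrow> bool" where
  "full_row_rank_on A \<Gamma> \<longleftrightarrow> inj_on (\<lambda>i. A $ i) \<Gamma> \<and> independent ((\<lambda>i. A $ i) ` \<Gamma>)"

text \<open>p* = -(A_G A_G^T)^{-1} A_G grad f(x*), an element of R^Gamma, stored as a vector in R^m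
  that vanishes outside Gamma; characterised as the unique solution of A_G A_G^T p = - A_G grad f(x*).\<close>
definition pstar :: "(real^'n \<Rightarrow> real^'n) \<Rightarrow> real^'n^'m \<Rightarrow> real^'m \<Rightarrow> real^'n \<Rightarrow> real^'m" where
  "pstar g A b x = (THE p. (\<forall>i. i \<notin> Gam A b x \<longrightarrow> p $ i = 0) \<and>
      (\<forall>i\<in>Gam A b x. (\<Sum>j\<in>Gam A b x. (A $ i \<bullet> A $ j) * p $ j) = - (A $ i \<bullet> g x)))"

definition tau1 :: "real \<Rightarrow> real^'n^'m \<Rightarrow> real^'m \<Rightarrow> real^'n \<Rightarrow> ereal" where
  "tau1 lam A b x = (let y = A *v x + b in
     if (\<forall>i. y $ i \<le> 0) then \<infinity>
     else ereal (Min {(y $ i)\<^sup>2 / (2 * lam) | i. y $ i > 0}))"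

definition tau2 :: "(real^'n \<Rightarrow> real^'n) \<Rightarrow> real \<Rightarrow> real^'n^'m \<Rightarrow> real^'m \<Rightarrow> real^'n \<Rightarrow> ereal" where
  "tau2 g lam A b x = (let p = pstar g A b x in
     if Gam A b x = {} \<or> p = 0 then \<infinity>
     else ereal (2 * lam / (Max {\<bar>p $ i\<bar> | i. i \<in> Gam A b x})\<^sup>2))"

end

theory Submission
  imports Defs
begin

text \<open>
  If \<open>y \<in> Prox (\<tau>\<lambda>) (y + \<tau>z)\<close>, comparing \<open>y\<close> with \<open>y + v\<close> in the proximal problem gives, for every
  \<open>v\<close>, \<open>\<tau>\<langle>z,v\<rangle> + \<tau>\<lambda>\<parallel>y\<^sub>+\<parallel>\<^sub>0 \<le> \<parallel>v\<parallel>\<^sup>2/2 + \<tau>\<lambda>\<parallel>(y + v)\<^sub>+\<parallel>\<^sub>0\<close>. With \<open>\<nabla>f(x\<^sup>*) = -A\<^sup>Tz\<close> and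
  \<open>v = A(x - x\<^sup>*)\<close>, strong convexity with \<open>\<tau>c\<^sub>f \<ge> \<parallel>A\<parallel>\<^sup>2\<close> absorbs the quadratic term, which gives (iii).
  For (ii), near \<open>x\<^sup>*\<close> the positive support of \<open>Ax + b\<close> can only grow; if it grows, the jump
  \<open>\<lambda>\<close> dominates \<open>\<langle>z,v\<rangle>\<close>, and if it does not, it stays fixed along the whole segment
  \<open>y + sv\<close>, so scaling \<open>v\<close> by \<open>s \<rightarrow> 0\<close> removes the quadratic term and forces \<open>\<langle>z,v\<rangle> \<le> 0\<close>.

  For (i), moving from a local minimizer along a direction \<open>d\<close> with \<open>A\<^sub>id \<le> 0\<close> (\<open>i \<in> \<Gamma>\<^sub>*\<close>) switches on
  no new positive components, so \<open>\<nabla>f(x\<^sup>*)\<cdot>d \<ge> 0\<close> on this cone. Farkas' lemma for the independent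
  rows of \<open>A\<^sub>\<Gamma>\<^sub>*\<close> yields \<open>\<nabla>f(x\<^sup>*) = -A\<^sub>\<Gamma>\<^sub>*\<^sup>T\<mu>\<close> with \<open>\<mu> \<ge> 0\<close>, necessarily \<open>\<mu> = p\<^sup>*\<close>; the bounds
  \<open>\<tau> < \<tau>\<^sub>1\<close> and \<open>\<tau> < \<tau>\<^sub>2\<close> are exactly the componentwise conditions for
  \<open>Ax\<^sup>* + b \<in> Prox (\<tau>\<lambda>) (Ax\<^sup>* + b + \<tau>\<mu>)\<close>.
\<close>

lemma has_real_derivative_along_line:
  fixes f :: "'a::real_normed_vector \<Rightarrow> real"
  assumes "(f has_derivative f') (at x)"
  shows "((\<lambda>t. f (x + t *\<^sub>R d)) has_real_derivative f' d) (at 0)"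
proof -
  have line: "((\<lambda>t::real. x + t *\<^sub>R d) has_derivative (\<lambda>t. t *\<^sub>R d)) (at 0)"
    by (auto intro!: derivative_eq_intros)
  have "((\<lambda>t. f (x + t *\<^sub>R d)) has_derivative (\<lambda>t. f' (t *\<^sub>R d))) (at 0)"
    using diff_chain_at[OF line, of f f'] assms by (simp add: o_def)
  moreover have "(\<lambda>t. f' (t *\<^sub>R d)) = (*) (f' d)"
    using linear_scale[OF has_derivative_linear[OF assms]] by (auto simp: mult.commute)
  ultimately show ?thesis
    unfolding has_field_derivative_def by simp
qed

lemma convex_on_gradient_ineq:
  fixes f :: "'a::real_normed_vector \<Rightarrow> real"
  assumes der: "(f has_derivative f') (at x0)" and cvx: "convex_on S f"
    and "x0 \<in> S" "x \<in> S"
  shows "f x0 + f' (x - x0) \<le> f x"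
proof (rule ccontr)
  assume neg: "\<not> ?thesis"
  define \<phi> where "\<phi> t = f (x0 + t *\<^sub>R (x - x0)) - t * (f x - f x0)" for t
  have "(\<phi> has_real_derivative (f' (x - x0) - (f x - f x0))) (at 0)"
    unfolding \<phi>_def[abs_def] using has_real_derivative_along_line[OF der]
    by (auto intro!: derivative_eq_intros)
  moreover have "f' (x - x0) - (f x - f x0) > 0"
    using neg by simp
  ultimately obtain e where "e > 0" and inc: "\<And>h. 0 < h \<Longrightarrow> h < e \<Longrightarrow> \<phi> 0 < \<phi> (0 + h)"
    by (metis DERIV_pos_inc_right)
  define h where "h = min (e/2) 1"
  have h: "0 < h" "h < e" "h \<le> 1"
    using \<open>e > 0\<close> by (auto simp: h_def)
  have "x0 + h *\<^sub>R (x - x0) = (1 - h) *\<^sub>R x0 + h *\<^sub>R x"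
    by (simp add: algebra_simps)
  then have "f (x0 + h *\<^sub>R (x - x0)) \<le> (1 - h) * f x0 + h * f x"
    using convex_onD[OF cvx, of h x0 x] h assms(3,4) by simp
  then have "\<phi> h \<le> \<phi> 0"
    by (simp add: \<phi>_def algebra_simps)
  with inc[OF h(1,2)] show False
    by simp
qed

lemma nonpos_if_le_mult_small:
  fixes a c :: real
  assumes "\<And>s. 0 < s \<Longrightarrow> s \<le> 1 \<Longrightarrow> a \<le> s * c"
  shows "a \<le> 0"
proof (rule tendsto_lowerbound)
  show "((\<lambda>s. s * c) \<longlongrightarrow> 0) (at_right 0)"
    by (auto intro!: tendsto_eq_intros)
  show "\<forall>\<^sub>F s in at_right 0. a \<le> s * c"
    using assms by (auto simp: eventually_at_right_field intro!: exI[of _ 1])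
qed simp

lemma eventually_strict_signs:
  fixes y :: "real^'m"
  assumes "(h \<longlongrightarrow> y) F"
  shows "\<forall>\<^sub>F x in F. \<forall>i. (0 < y $ i \<longrightarrow> 0 < h x $ i) \<and> (y $ i < 0 \<longrightarrow> h x $ i < 0)"
proof (rule eventually_all_finite, intro allI eventually_conj)
  fix i
  have "((\<lambda>x. h x $ i) \<longlongrightarrow> y $ i) F"
    using assms by (rule tendsto_vec_nth)
  then show "\<forall>\<^sub>F x in F. 0 < y $ i \<longrightarrow> 0 < h x $ i"
    and "\<forall>\<^sub>F x in F. y $ i < 0 \<longrightarrow> h x $ i < 0"
    by (auto dest: order_tendstoD intro: eventually_mono)
qed

lemma local_minimizer_iff_eventually_nhds:
  "local_minimizer F x \<longleftrightarrow> (\<forall>\<^sub>F y in nhds x. F x \<le> F y)"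
  unfolding local_minimizer_def eventually_nhds_metric ..

lemma separating_vector_if_not_in_span:
  fixes x :: "'a::euclidean_space"
  assumes "x \<notin> span S"
  obtains q where "\<And>w. w \<in> S \<Longrightarrow> w \<bullet> q = 0" and "0 < x \<bullet> q"
proof -
  obtain p q where p: "p \<in> span S" and q: "\<And>w. w \<in> span S \<Longrightarrow> orthogonal q w"
    and x: "x = p + q"
    using orthogonal_subspace_decomp_exists[of S x] by metis
  have "p \<bullet> q = 0"
    using q[OF p] by (simp add: orthogonal_def inner_commute)
  then have "x \<bullet> q = q \<bullet> q"
    by (simp add: x inner_add_left)
  moreover have "q \<noteq> 0"
    using assms p x by auto
  moreover have "w \<bullet> q = 0" if "w \<in> S" for w
    using q[OF span_base[OF that]] by (simp add: orthogonal_def inner_commute)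
  ultimately show thesis
    by (intro that[of q]) auto
qed

lemma sum_family_eq_zero_imp_coeff_zero:
  fixes a :: "'i \<Rightarrow> 'a::real_vector"
  assumes "finite \<Gamma>" "inj_on a \<Gamma>" "independent (a ` \<Gamma>)"
    and "(\<Sum>j\<in>\<Gamma>. c j *\<^sub>R a j) = 0" and "i \<in> \<Gamma>"
  shows "c i = 0"
proof -
  have "(\<Sum>v\<in>a ` \<Gamma>. c (inv_into \<Gamma> a v) *\<^sub>R v) = 0"
    using assms(2,4) by (simp add: sum.reindex)
  from real_vector.independentD[OF assms(3) finite_imageI[OF assms(1)] subset_refl this]
  have "c (inv_into \<Gamma> a (a i)) = 0"
    using assms(5) by blast
  then show ?thesis
    using assms(2,5) by simp
qed

lemma span_family_sum:
  fixes a :: "'i \<Rightarrow> 'a::real_vector"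
  assumes "finite \<Gamma>" "inj_on a \<Gamma>" "x \<in> span (a ` \<Gamma>)"
  obtains c where "x = (\<Sum>j\<in>\<Gamma>. c j *\<^sub>R a j)"
proof -
  obtain u where "x = (\<Sum>v\<in>a ` \<Gamma>. u v *\<^sub>R v)"
    using assms(3) span_finite[of "a ` \<Gamma>"] assms(1) by auto
  then have "x = (\<Sum>j\<in>\<Gamma>. u (a j) *\<^sub>R a j)"
    using assms(2) by (simp add: sum.reindex)
  then show thesis
    by (rule that)
qed

lemma Farkas_independent:
  fixes a :: "'i \<Rightarrow> 'a::euclidean_space"
  assumes fin: "finite \<Gamma>" and inj: "inj_on a \<Gamma>" and ind: "independent (a ` \<Gamma>)"
    and dual: "\<And>d. (\<forall>i\<in>\<Gamma>. a i \<bullet> d \<le> 0) \<Longrightarrow> 0 \<le> G \<bullet> d"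
  obtains \<mu> where "\<And>i. i \<in> \<Gamma> \<Longrightarrow> 0 \<le> \<mu> i" and "G = - (\<Sum>j\<in>\<Gamma>. \<mu> j *\<^sub>R a j)"
proof -
  have "G \<in> span (a ` \<Gamma>)"
  proof (rule ccontr)
    assume "G \<notin> span (a ` \<Gamma>)"
    then obtain q where "\<And>i. i \<in> \<Gamma> \<Longrightarrow> a i \<bullet> q = 0" and "0 < G \<bullet> q"
      by (rule separating_vector_if_not_in_span) auto
    moreover have "0 \<le> G \<bullet> - q"
      using calculation(1) by (intro dual) simp
    ultimately show False
      by simp
  qed
  then obtain c where Gc: "G = (\<Sum>j\<in>\<Gamma>. c j *\<^sub>R a j)"
    by (rule span_family_sum[OF fin inj])
  have "c i \<le> 0" if i: "i \<in> \<Gamma>" for i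
  proof -
    have "a i \<notin> span (a ` \<Gamma> - {a i})"
      using ind i by (simp add: dependent_def)
    then obtain q where q: "\<And>w. w \<in> a ` \<Gamma> - {a i} \<Longrightarrow> w \<bullet> q = 0" and qi: "0 < a i \<bullet> q"
      by (rule separating_vector_if_not_in_span) blast
    have other: "a j \<bullet> q = 0" if "j \<in> \<Gamma> - {i}" for j
      using that i inj q by (auto simp: inj_on_eq_iff)
    have "0 \<le> G \<bullet> - q"
    proof (intro dual ballI)
      fix j assume "j \<in> \<Gamma>"
      then show "a j \<bullet> - q \<le> 0"
        using other[of j] qi by (cases "j = i") auto
    qed
    also have "G \<bullet> - q = - (\<Sum>j\<in>\<Gamma>. c j * (a j \<bullet> q))"
      by (simp add: Gc inner_sum_left)
    also have "\<dots> = - (c i * (a i \<bullet> q))"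
      using fin i other by (simp add: sum.remove)
    finally show "c i \<le> 0"
      using qi by (simp add: mult_le_0_iff)
  qed
  then show thesis
    by (intro that[of "\<lambda>j. - c j"]) (auto simp: Gc sum_negf)
qed

lemma Gram_system_unique:
  fixes a :: "'i \<Rightarrow> 'a::real_inner"
  assumes fin: "finite \<Gamma>" and inj: "inj_on a \<Gamma>" and ind: "independent (a ` \<Gamma>)"
    and eq: "\<And>i. i \<in> \<Gamma> \<Longrightarrow> (\<Sum>j\<in>\<Gamma>. (a i \<bullet> a j) * p j) = (\<Sum>j\<in>\<Gamma>. (a i \<bullet> a j) * p' j)"
    and "i \<in> \<Gamma>"
  shows "p i = p' i"
proof -
  define v where "v = (\<Sum>j\<in>\<Gamma>. (p j - p' j) *\<^sub>R a j)"
  have "a i \<bullet> v = 0" if "i \<in> \<Gamma>" for i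
    using eq[OF that] by (simp add: v_def inner_sum_right algebra_simps sum_subtractf)
  then have "v \<bullet> v = 0"
    by (subst (1) v_def) (simp add: inner_sum_left)
  then have "(\<Sum>j\<in>\<Gamma>. (p j - p' j) *\<^sub>R a j) = 0"
    by (simp add: v_def)
  from sum_family_eq_zero_imp_coeff_zero[OF fin inj ind this \<open>i \<in> \<Gamma>\<close>] show ?thesis
    by simp
qed

lemma pos0_mono:
  "{i. 0 < y $ i} \<subseteq> {i. 0 < w $ i} \<Longrightarrow> pos0 y \<le> pos0 w"
  unfolding pos0_def by (intro card_mono) auto

lemma positive_set_segment:
  fixes v w :: "real^'m"
  assumes "{i. 0 < v $ i} = {i. 0 < w $ i}" and "0 \<le> s" "s \<le> 1"
  shows "{i. 0 < ((1 - s) *\<^sub>R v + s *\<^sub>R w) $ i} = {i. 0 < v $ i}"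
proof -
  have "0 < (1 - s) * v $ i + s * w $ i \<longleftrightarrow> 0 < v $ i" for i
  proof (cases "0 < v $ i")
    case True
    then have "0 < w $ i"
      using assms(1) by blast
    with True assms(2,3) show ?thesis
      by (cases "s = 0") (auto intro: add_nonneg_pos add_pos_nonneg)
  next
    case False
    then have "w $ i \<le> 0"
      using assms(1) by (metis mem_Collect_eq not_le)
    with False assms(2,3) show ?thesis
      by (auto simp: not_less intro!: add_nonpos_nonpos mult_nonneg_nonpos)
  qed
  then show ?thesis
    by simp
qed

lemma Prox_objective_separable:
  fixes v w :: "real^'m"
  shows "(1/2) * (norm (v - w))\<^sup>2 + \<alpha> * real (pos0 v)
    = (\<Sum>i\<in>UNIV. (v $ i - w $ i)\<^sup>2 / 2 + \<alpha> * (if 0 < v $ i then 1 else 0))"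
proof -
  have "(norm (v - w))\<^sup>2 = (\<Sum>i\<in>UNIV. (v $ i - w $ i)\<^sup>2)"
    unfolding power2_norm_eq_inner inner_vec_def by (simp add: power2_eq_square)
  moreover have "real (pos0 v) = (\<Sum>i\<in>UNIV. if 0 < v $ i then 1 else 0)"
    by (simp add: pos0_def sum.If_cases)
  ultimately show ?thesis
    by (simp add: sum.distrib sum_distrib_left sum_divide_distrib)
qed

lemma Prox_if_coordinatewise:
  fixes p w :: "real^'m"
  assumes "\<And>i s. (p $ i - w $ i)\<^sup>2 / 2 + \<alpha> * (if 0 < p $ i then 1 else 0)
      \<le> (s - w $ i)\<^sup>2 / 2 + \<alpha> * (if 0 < s then 1 else 0)"
  shows "p \<in> Prox \<alpha> w"
  unfolding Prox_def Prox_objective_separable by (auto intro: sum_mono assms)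

lemma square_le_square_diff_if_opposite_signs:
  fixes s w :: real
  assumes "s \<le> 0" and "0 \<le> w"
  shows "w\<^sup>2 \<le> (s - w)\<^sup>2"
  using power_mono[of w "w - s" 2] assms by (simp add: power2_commute)

lemma scalar_prox_ineq:
  fixes y w s \<alpha> :: real
  assumes "0 \<le> \<alpha>"
    and "(y < 0 \<and> w = y) \<or> (0 < y \<and> w = y \<and> 2 * \<alpha> \<le> y\<^sup>2) \<or> (y = 0 \<and> 0 \<le> w \<and> w\<^sup>2 \<le> 2 * \<alpha>)"
  shows "(y - w)\<^sup>2 / 2 + \<alpha> * (if 0 < y then 1 else 0) \<le> (s - w)\<^sup>2 / 2 + \<alpha> * (if 0 < s then 1 else 0)"
  using assms(2)
proof (elim disjE conjE)
  assume "y < 0" "w = y"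
  then show ?thesis
    using \<open>0 \<le> \<alpha>\<close> by simp
next
  assume "0 < y" "w = y" "2 * \<alpha> \<le> y\<^sup>2"
  then show ?thesis
    using square_le_square_diff_if_opposite_signs[of s y] by (cases "0 < s") auto
next
  assume "y = 0" "0 \<le> w" "w\<^sup>2 \<le> 2 * \<alpha>"
  show ?thesis
  proof (cases "0 < s")
    case True
    have "(y - w)\<^sup>2 / 2 + \<alpha> * (if 0 < y then 1 else 0) = w\<^sup>2 / 2"
      using \<open>y = 0\<close> by simp
    also have "\<dots> \<le> (s - w)\<^sup>2 / 2 + \<alpha>"
      using \<open>w\<^sup>2 \<le> 2 * \<alpha>\<close> zero_le_power2[of "s - w"] by linarith
    also have "\<dots> = (s - w)\<^sup>2 / 2 + \<alpha> * (if 0 < s then 1 else 0)"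
      using True by simp
    finally show ?thesis .
  next
    case False
    with \<open>y = 0\<close> \<open>0 \<le> w\<close> show ?thesis
      using square_le_square_diff_if_opposite_signs[of s w] by simp
  qed
qed

lemma Prox_fixed_point_ineq:
  fixes y z v :: "real^'m"
  assumes "y \<in> Prox \<alpha> (y + \<tau> *\<^sub>R z)"
  shows "\<tau> * (z \<bullet> v) + \<alpha> * real (pos0 y) \<le> (norm v)\<^sup>2 / 2 + \<alpha> * real (pos0 (y + v))"
proof -
  have "(1/2) * (norm (y - (y + \<tau> *\<^sub>R z)))\<^sup>2 + \<alpha> * real (pos0 y)
      \<le> (1/2) * (norm (y + v - (y + \<tau> *\<^sub>R z)))\<^sup>2 + \<alpha> * real (pos0 (y + v))"
    using assms unfolding Prox_def by blast
  moreover have "(norm (y + v - (y + \<tau> *\<^sub>R z)))\<^sup>2 = (norm v)\<^sup>2 - 2 * \<tau> * (z \<bullet> v) + \<tau>\<^sup>2 * (norm z)\<^sup>2"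
    unfolding power2_norm_eq_inner
    by (simp add: inner_diff_left inner_diff_right inner_commute power2_eq_square algebra_simps)
  moreover have "(norm (y - (y + \<tau> *\<^sub>R z)))\<^sup>2 = \<tau>\<^sup>2 * (norm z)\<^sup>2"
    by (simp add: power_mult_distrib)
  ultimately show ?thesis
    by (simp add: field_simps)
qed

lemma Prox_fixed_point_local_bound:
  fixes y z u :: "real^'m"
  assumes prox: "y \<in> Prox (\<tau> * lam) (y + \<tau> *\<^sub>R z)" and "0 < \<tau>" "0 \<le> lam"
    and pos: "\<And>i. 0 < y $ i \<Longrightarrow> 0 < (y + u) $ i"
    and small: "z \<bullet> u < lam"
  shows "z \<bullet> u \<le> lam * (real (pos0 (y + u)) - real (pos0 y))"
proof -
  have sub: "{i. 0 < y $ i} \<subseteq> {i. 0 < (y + u) $ i}"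
    using pos by blast
  show ?thesis
  proof (cases "pos0 y < pos0 (y + u)")
    case True
    then have "lam \<le> lam * (real (pos0 (y + u)) - real (pos0 y))"
      using \<open>0 \<le> lam\<close> by (simp add: mult_le_cancel_left1 less_imp_le)
    with small show ?thesis
      by linarith
  next
    case False
    then have eq: "{i. 0 < y $ i} = {i. 0 < (y + u) $ i}"
      using sub pos0_mono[OF sub] by (intro card_subset_eq) (auto simp: pos0_def)
    have "\<tau> * (z \<bullet> u) \<le> s * ((norm u)\<^sup>2 / 2)" if s: "0 < s" "s \<le> 1" for s
    proof -
      have "y + s *\<^sub>R u = (1 - s) *\<^sub>R y + s *\<^sub>R (y + u)"
        by (simp add: algebra_simps)
      then have "pos0 (y + s *\<^sub>R u) = pos0 y"
        using positive_set_segment[OF eq, of s] s by (simp add: pos0_def)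
      then have "s * (\<tau> * (z \<bullet> u)) \<le> s * (s * ((norm u)\<^sup>2 / 2))"
        using Prox_fixed_point_ineq[OF prox, of "s *\<^sub>R u"]
        by (simp add: power_mult_distrib power2_eq_square algebra_simps)
      then show ?thesis
        using s by simp
    qed
    then have "\<tau> * (z \<bullet> u) \<le> 0"
      by (rule nonpos_if_le_mult_small)
    then show ?thesis
      using False pos0_mono[OF sub] \<open>0 < \<tau>\<close> by (simp add: mult_le_0_iff)
  qed
qed

lemma inner_eq_if_stationary:
  fixes A :: "real^'n^'m"
  assumes "G + transpose A *v z = 0"
  shows "G \<bullet> d = - (z \<bullet> (A *v d))"
proof -
  have "G = - (z v* A)"
    using assms by (simp add: eq_neg_iff_add_eq_0)
  then show ?thesis
    by (simp add: dot_lmul_matrix)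
qed

lemma Pstat_imp_local_minimizer:
  fixes f :: "real^'n \<Rightarrow> real" and A :: "real^'n^'m"
  assumes grad: "(f has_derivative (\<lambda>h. g xs \<bullet> h)) (at xs)"
    and "0 < lam" "0 < \<tau>" and stat: "Pstat g lam A b \<tau> xs"
    and cvx: "convex_on (ball xs \<delta>) f" and "0 < \<delta>"
  shows "local_minimizer (objP f lam A b) xs"
proof -
  obtain z where gz: "g xs + transpose A *v z = 0"
    and prox: "A *v xs + b \<in> Prox (\<tau> * lam) (A *v xs + b + \<tau> *\<^sub>R z)"
    using stat unfolding Pstat_def by blast
  define y where "y = A *v xs + b"
  have "((\<lambda>x. A *v x + b) \<longlongrightarrow> y) (nhds xs)"
    unfolding y_def by (intro tendsto_intros bounded_linear.tendsto[OF matrix_vector_mul_bounded_linear] filterlim_ident)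
  then have "\<forall>\<^sub>F x in nhds xs. \<forall>i. (0 < y $ i \<longrightarrow> 0 < (A *v x + b) $ i) \<and> (y $ i < 0 \<longrightarrow> (A *v x + b) $ i < 0)"
    by (rule eventually_strict_signs)
  moreover have "((\<lambda>x. z \<bullet> (A *v (x - xs))) \<longlongrightarrow> 0) (nhds xs)"
    by (auto intro!: tendsto_eq_intros bounded_linear.tendsto[OF matrix_vector_mul_bounded_linear] filterlim_ident)
  then have "\<forall>\<^sub>F x in nhds xs. z \<bullet> (A *v (x - xs)) < lam"
    using \<open>0 < lam\<close> by (rule order_tendstoD)
  moreover have "\<forall>\<^sub>F x in nhds xs. x \<in> ball xs \<delta>"
    using \<open>0 < \<delta>\<close> by (intro eventually_nhds_in_open) auto
  ultimately have "\<forall>\<^sub>F x in nhds xs. objP f lam A b xs \<le> objP f lam A b x"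
  proof eventually_elim
    case (elim x)
    define u where "u = A *v (x - xs)"
    have yu: "A *v x + b = y + u"
      by (simp add: y_def u_def matrix_vector_mult_diff_distrib)
    have "f xs - z \<bullet> u \<le> f x"
      using convex_on_gradient_ineq[OF grad cvx _ elim(3)] \<open>0 < \<delta>\<close> inner_eq_if_stationary[OF gz]
      by (simp add: u_def)
    moreover have "z \<bullet> u \<le> lam * (real (pos0 (y + u)) - real (pos0 y))"
      using elim(1,2) yu \<open>0 < \<tau>\<close> \<open>0 < lam\<close>
      by (intro Prox_fixed_point_local_bound[OF prox[folded y_def]]) (auto simp: u_def)
    ultimately show ?case
      unfolding objP_def yu y_def[symmetric] by (simp add: right_diff_distrib)
  qed
  then show ?thesis
    by (simp add: local_minimizer_iff_eventually_nhds)
qed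

lemma Pstat_imp_global_minimizer:
  fixes f :: "real^'n \<Rightarrow> real" and A :: "real^'n^'m"
  assumes "0 < cf"
    and strong: "\<And>x x'. f x' + g x' \<bullet> (x - x') + cf / 2 * (norm (x - x'))\<^sup>2 \<le> f x"
    and tau: "(onorm (\<lambda>x. A *v x))\<^sup>2 / cf \<le> \<tau>" and stat: "Pstat g lam A b \<tau> xs"
  shows "global_minimizer (objP f lam A b) xs"
  unfolding global_minimizer_def
proof
  fix x
  obtain z where gz: "g xs + transpose A *v z = 0"
    and prox: "A *v xs + b \<in> Prox (\<tau> * lam) (A *v xs + b + \<tau> *\<^sub>R z)"
    using stat unfolding Pstat_def by blast
  define y where "y = A *v xs + b"
  define d where "d = x - xs"
  define u where "u = A *v d"
  have yu: "A *v x + b = y + u"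
    by (simp add: y_def u_def d_def matrix_vector_mult_diff_distrib)
  have fx: "f xs - z \<bullet> u + cf / 2 * (norm d)\<^sup>2 \<le> f x"
    using strong[where x=x and x'=xs] inner_eq_if_stationary[OF gz, of d] by (simp add: d_def u_def)
  have "0 \<le> \<tau>"
    using tau \<open>0 < cf\<close> by (meson divide_nonneg_pos order_trans zero_le_power2)
  have "norm u \<le> onorm (\<lambda>x. A *v x) * norm d"
    unfolding u_def by (rule onorm) simp
  then have "(norm u)\<^sup>2 \<le> (onorm (\<lambda>x. A *v x))\<^sup>2 * (norm d)\<^sup>2"
    by (metis norm_ge_zero power_mono power_mult_distrib)
  also have "\<dots> \<le> \<tau> * cf * (norm d)\<^sup>2"
    using tau \<open>0 < cf\<close> by (intro mult_right_mono) (simp_all add: divide_le_eq)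
  finally have nu: "(norm u)\<^sup>2 \<le> \<tau> * cf * (norm d)\<^sup>2" .
  show "objP f lam A b xs \<le> objP f lam A b x"
  proof (cases "\<tau> = 0")
    case True
    then have "u = 0"
      using nu by simp
    moreover have "0 \<le> cf / 2 * (norm d)\<^sup>2"
      using \<open>0 < cf\<close> by simp
    ultimately show ?thesis
      using fx unfolding objP_def yu y_def[symmetric] by simp
  next
    case False
    have "\<tau> * (z \<bullet> u) + \<tau> * lam * real (pos0 y) \<le> (norm u)\<^sup>2 / 2 + \<tau> * lam * real (pos0 (y + u))"
      by (rule Prox_fixed_point_ineq[OF prox[folded y_def]])
    moreover have "\<tau> * (f xs - z \<bullet> u + cf / 2 * (norm d)\<^sup>2) \<le> \<tau> * f x"
      using fx \<open>0 \<le> \<tau>\<close> by (rule mult_left_mono)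
    ultimately have "\<tau> * (f xs + lam * real (pos0 y)) \<le> \<tau> * (f x + lam * real (pos0 (y + u)))"
      using nu by (simp add: algebra_simps)
    then show ?thesis
      using False \<open>0 \<le> \<tau>\<close> unfolding objP_def yu y_def[symmetric] by simp
  qed
qed

lemma pos0_eventually_le_along:
  fixes A :: "real^'n^'m"
  assumes feasible: "\<And>i. (A *v x + b) $ i = 0 \<Longrightarrow> A $ i \<bullet> d \<le> 0"
  shows "\<forall>\<^sub>F t in at_right 0. pos0 (A *v (x + t *\<^sub>R d) + b) \<le> pos0 (A *v x + b)"
proof -
  define y where "y = A *v x + b"
  have "((\<lambda>t. A *v (x + t *\<^sub>R d) + b) \<longlongrightarrow> y) (at_right 0)"
    unfolding y_def
    by (auto intro!: tendsto_eq_intros bounded_linear.tendsto[OF matrix_vector_mul_bounded_linear])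
  then have "\<forall>\<^sub>F t in at_right 0. \<forall>i. (0 < y $ i \<longrightarrow> 0 < (A *v (x + t *\<^sub>R d) + b) $ i)
      \<and> (y $ i < 0 \<longrightarrow> (A *v (x + t *\<^sub>R d) + b) $ i < 0)"
    by (rule eventually_strict_signs)
  moreover have "\<forall>\<^sub>F t in at_right 0. 0 < (t::real)"
    by (rule eventually_at_right_less)
  ultimately show ?thesis
  proof eventually_elim
    case (elim t)
    have "0 < y $ i" if pos: "0 < (A *v (x + t *\<^sub>R d) + b) $ i" for i
    proof (cases "y $ i = 0")
      case True
      have "(A *v (x + t *\<^sub>R d) + b) $ i = t * (A $ i \<bullet> d)"
        using True by (simp add: y_def algebra_simps matrix_vector_mul_component)
      moreover have "t * (A $ i \<bullet> d) \<le> 0"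
        using feasible[of i] True elim(2) unfolding y_def by (simp add: mult_nonneg_nonpos)
      ultimately show ?thesis
        using pos by linarith
    next
      case False
      show ?thesis
      proof (rule ccontr)
        assume "\<not> 0 < y $ i"
        with False have "y $ i < 0"
          by simp
        with elim(1) pos show False
          by auto
      qed
    qed
    then show ?case
      unfolding y_def[symmetric] by (intro pos0_mono) auto
  qed
qed

lemma local_minimizer_imp_directional_nonneg:
  fixes f :: "real^'n \<Rightarrow> real" and A :: "real^'n^'m"
  assumes grad: "(f has_derivative (\<lambda>h. G \<bullet> h)) (at x)"
    and lm: "local_minimizer (objP f lam A b) x" and "0 \<le> lam"
    and feasible: "\<And>i. i \<in> Gam A b x \<Longrightarrow> A $ i \<bullet> d \<le> 0"
  shows "0 \<le> G \<bullet> d"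
proof (rule ccontr)
  assume "\<not> 0 \<le> G \<bullet> d"
  then obtain e where "0 < e" and "\<forall>h>0. h < e \<longrightarrow> f (x + (0 + h) *\<^sub>R d) < f (x + 0 *\<^sub>R d)"
    using DERIV_neg_dec_right[OF has_real_derivative_along_line[OF grad, of d]] by (metis not_le)
  then have "\<forall>\<^sub>F t in at_right 0. f (x + t *\<^sub>R d) < f x"
    by (auto simp: eventually_at_right_field)
  moreover have "\<forall>\<^sub>F t in at_right 0. pos0 (A *v (x + t *\<^sub>R d) + b) \<le> pos0 (A *v x + b)"
    using feasible by (intro pos0_eventually_le_along) (simp add: Gam_def)
  moreover have "\<forall>\<^sub>F t in at_right 0. objP f lam A b x \<le> objP f lam A b (x + t *\<^sub>R d)"
  proof -
    have "((\<lambda>t. x + t *\<^sub>R d) \<longlongrightarrow> x) (at_right 0)"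
      by (auto intro!: tendsto_eq_intros)
    with lm show ?thesis
      unfolding local_minimizer_iff_eventually_nhds by (rule eventually_compose_filterlim)
  qed
  ultimately have "\<forall>\<^sub>F t in at_right 0. f (x + t *\<^sub>R d) < f x
      \<and> pos0 (A *v (x + t *\<^sub>R d) + b) \<le> pos0 (A *v x + b)
      \<and> objP f lam A b x \<le> objP f lam A b (x + t *\<^sub>R d)"
    by (intro eventually_conj)
  then obtain t where "f (x + t *\<^sub>R d) < f x"
    and "pos0 (A *v (x + t *\<^sub>R d) + b) \<le> pos0 (A *v x + b)"
    and "objP f lam A b x \<le> objP f lam A b (x + t *\<^sub>R d)"
    using eventually_happens'[OF trivial_limit_at_right_real] by blast
  moreover from this(2) have "lam * real (pos0 (A *v (x + t *\<^sub>R d) + b)) \<le> lam * real (pos0 (A *v x + b))"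
    using \<open>0 \<le> lam\<close> by (simp add: mult_left_mono)
  ultimately show False
    unfolding objP_def by linarith
qed

lemma pstar_eqI:
  fixes A :: "real^'n^'m"
  assumes fr: "full_row_rank_on A (Gam A b x)"
    and outside: "\<And>i. i \<notin> Gam A b x \<Longrightarrow> p $ i = 0"
    and system: "\<And>i. i \<in> Gam A b x \<Longrightarrow> (\<Sum>j\<in>Gam A b x. (A $ i \<bullet> A $ j) * p $ j) = - (A $ i \<bullet> g x)"
  shows "pstar g A b x = p"
  unfolding pstar_def
proof (rule the_equality)
  show "(\<forall>i. i \<notin> Gam A b x \<longrightarrow> p $ i = 0) \<and>
      (\<forall>i\<in>Gam A b x. (\<Sum>j\<in>Gam A b x. (A $ i \<bullet> A $ j) * p $ j) = - (A $ i \<bullet> g x))"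
    using outside system by blast
next
  fix p' assume p': "(\<forall>i. i \<notin> Gam A b x \<longrightarrow> p' $ i = 0) \<and>
      (\<forall>i\<in>Gam A b x. (\<Sum>j\<in>Gam A b x. (A $ i \<bullet> A $ j) * p' $ j) = - (A $ i \<bullet> g x))"
  have "p' $ i = p $ i" if "i \<in> Gam A b x" for i
  proof (rule Gram_system_unique[where a = "\<lambda>i. A $ i" and p = "\<lambda>j. p' $ j" and p' = "\<lambda>j. p $ j"])
    show "inj_on (\<lambda>i. A $ i) (Gam A b x)" and "independent ((\<lambda>i. A $ i) ` Gam A b x)"
      using fr by (simp_all add: full_row_rank_on_def)
    show "(\<Sum>j\<in>Gam A b x. (A $ k \<bullet> A $ j) * p' $ j) = (\<Sum>j\<in>Gam A b x. (A $ k \<bullet> A $ j) * p $ j)"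
      if "k \<in> Gam A b x" for k
      using p' system[OF that] that by simp
  qed (use that in simp_all)
  then show "p' = p"
    using p' outside by (metis vec_eq_iff)
qed

lemma tau1_bound:
  assumes "ereal \<tau> < tau1 lam A b x" and "0 < lam" and "0 < (A *v x + b) $ i"
  shows "2 * (\<tau> * lam) < ((A *v x + b) $ i)\<^sup>2"
proof -
  define y where "y = A *v x + b"
  let ?M = "{(y $ j)\<^sup>2 / (2 * lam) | j. 0 < y $ j}"
  have "\<not> (\<forall>j. y $ j \<le> 0)"
    using assms(3) by (auto simp: y_def not_le)
  then have "tau1 lam A b x = ereal (Min ?M)"
    unfolding tau1_def Let_def y_def[symmetric] by simp
  then have "\<tau> < Min ?M"
    using assms(1) by simp
  also have "Min ?M \<le> (y $ i)\<^sup>2 / (2 * lam)"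
    using assms(3) by (intro Min_le) (auto simp: y_def)
  finally have "\<tau> < (y $ i)\<^sup>2 / (2 * lam)" .
  then show ?thesis
    using \<open>0 < lam\<close> by (simp add: y_def field_simps)
qed

lemma tau2_bound:
  assumes "ereal \<tau> < tau2 g lam A b x" and "0 < lam" and "0 \<le> \<tau>" and "i \<in> Gam A b x"
  shows "\<tau> * (pstar g A b x $ i)\<^sup>2 \<le> 2 * lam"
proof (cases "pstar g A b x $ i = 0")
  case True
  then show ?thesis
    using \<open>0 < lam\<close> by simp
next
  case False
  define p where "p = pstar g A b x"
  define M where "M = Max {\<bar>p $ j\<bar> | j. j \<in> Gam A b x}"
  have "finite {\<bar>p $ j\<bar> | j. j \<in> Gam A b x}"
    using finite_image_set[of "\<lambda>j. j \<in> Gam A b x" "\<lambda>j. \<bar>p $ j\<bar>"] by simp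
  then have pM: "\<bar>p $ i\<bar> \<le> M"
    unfolding M_def using assms(4) by (intro Max_ge) auto
  then have "0 < M"
    using False by (simp add: p_def)
  have "Gam A b x \<noteq> {}" and "p \<noteq> 0"
    using assms(4) False by (auto simp: p_def)
  then have "\<tau> < 2 * lam / M\<^sup>2"
    using assms(1) by (simp add: tau2_def Let_def p_def M_def)
  then have "\<tau> * M\<^sup>2 < 2 * lam"
    using \<open>0 < M\<close> by (simp add: pos_less_divide_eq)
  moreover have "(p $ i)\<^sup>2 \<le> M\<^sup>2"
    using power_mono[OF pM, of 2] by simp
  then have "\<tau> * (p $ i)\<^sup>2 \<le> \<tau> * M\<^sup>2"
    using \<open>0 \<le> \<tau>\<close> by (rule mult_left_mono)
  ultimately show ?thesis
    by (simp add: p_def)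
qed

lemma Prox_fixed_point_if_componentwise:
  fixes y p :: "real^'m"
  assumes "0 < \<tau>" "0 < lam"
    and off: "\<And>i. y $ i \<noteq> 0 \<Longrightarrow> p $ i = 0"
    and pos: "\<And>i. 0 < y $ i \<Longrightarrow> 2 * (\<tau> * lam) \<le> (y $ i)\<^sup>2"
    and zero: "\<And>i. y $ i = 0 \<Longrightarrow> 0 \<le> p $ i \<and> \<tau> * (p $ i)\<^sup>2 \<le> 2 * lam"
  shows "y \<in> Prox (\<tau> * lam) (y + \<tau> *\<^sub>R p)"
proof (rule Prox_if_coordinatewise, rule scalar_prox_ineq)
  fix i
  show "0 \<le> \<tau> * lam"
    using assms(1,2) by simp
  consider "y $ i < 0" | "0 < y $ i" | "y $ i = 0"
    by linarith
  then show "(y $ i < 0 \<and> (y + \<tau> *\<^sub>R p) $ i = y $ i)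
      \<or> (0 < y $ i \<and> (y + \<tau> *\<^sub>R p) $ i = y $ i \<and> 2 * (\<tau> * lam) \<le> (y $ i)\<^sup>2)
      \<or> (y $ i = 0 \<and> 0 \<le> (y + \<tau> *\<^sub>R p) $ i \<and> ((y + \<tau> *\<^sub>R p) $ i)\<^sup>2 \<le> 2 * (\<tau> * lam))"
  proof cases
    case 1
    then show ?thesis
      using off[of i] by simp
  next
    case 2
    then show ?thesis
      using off[of i] pos[of i] by simp
  next
    case 3
    have "(\<tau> * p $ i)\<^sup>2 = \<tau> * (\<tau> * (p $ i)\<^sup>2)"
      by (simp add: power2_eq_square)
    also have "\<dots> \<le> \<tau> * (2 * lam)"
      using zero[OF 3] \<open>0 < \<tau>\<close> by (intro mult_left_mono) auto
    finally show ?thesis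
      using 3 zero[OF 3] \<open>0 < \<tau>\<close> by (simp add: mult_ac)
  qed
qed

lemma local_minimizer_imp_Pstat:
  fixes f :: "real^'n \<Rightarrow> real" and A :: "real^'n^'m"
  assumes grad: "(f has_derivative (\<lambda>h. g xs \<bullet> h)) (at xs)"
    and "0 < lam" and lm: "local_minimizer (objP f lam A b) xs"
    and fr: "full_row_rank_on A (Gam A b xs)" and "0 < \<tau>"
    and tau1: "ereal \<tau> < tau1 lam A b xs" and tau2: "ereal \<tau> < tau2 g lam A b xs"
  shows "Pstat g lam A b \<tau> xs"
proof -
  define \<Gamma> where "\<Gamma> = Gam A b xs"
  define y where "y = A *v xs + b"
  have \<Gamma>_iff: "i \<in> \<Gamma> \<longleftrightarrow> y $ i = 0" for i
    by (simp add: \<Gamma>_def Gam_def y_def)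
  have "0 \<le> g xs \<bullet> d" if "\<forall>i\<in>\<Gamma>. A $ i \<bullet> d \<le> 0" for d
    using that \<open>0 < lam\<close> by (intro local_minimizer_imp_directional_nonneg[OF grad lm]) (auto simp: \<Gamma>_def)
  then obtain \<mu> where \<mu>: "\<And>i. i \<in> \<Gamma> \<Longrightarrow> 0 \<le> \<mu> i" and g\<mu>: "g xs = - (\<Sum>j\<in>\<Gamma>. \<mu> j *\<^sub>R A $ j)"
    using fr Farkas_independent[of \<Gamma> "\<lambda>i. A $ i" "g xs"] by (auto simp: \<Gamma>_def full_row_rank_on_def)
  define p :: "real^'m" where "p = (\<chi> i. if i \<in> \<Gamma> then \<mu> i else 0)"
  have "transpose A *v p = (\<Sum>i\<in>UNIV. p $ i *\<^sub>R A $ i)"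
    by (simp add: vector_matrix_mult_def vec_eq_iff sum_component mult.commute)
  also have "\<dots> = (\<Sum>i\<in>\<Gamma>. \<mu> i *\<^sub>R A $ i)"
    by (rule sum.mono_neutral_cong_right) (auto simp: p_def)
  finally have stationary: "g xs + transpose A *v p = 0"
    by (simp add: g\<mu>)
  have "pstar g A b xs = p"
    by (rule pstar_eqI[OF fr])
      (auto simp: p_def \<Gamma>_def[symmetric] g\<mu> inner_sum_right if_distrib sum.If_cases mult.commute)
  have "y \<in> Prox (\<tau> * lam) (y + \<tau> *\<^sub>R p)"
  proof (rule Prox_fixed_point_if_componentwise[OF \<open>0 < \<tau>\<close> \<open>0 < lam\<close>])
    show "p $ i = 0" if "y $ i \<noteq> 0" for i
      using that \<Gamma>_iff[of i] by (simp add: p_def)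
    show "2 * (\<tau> * lam) \<le> (y $ i)\<^sup>2" if "0 < y $ i" for i
      using that tau1_bound[OF tau1 \<open>0 < lam\<close>, of i] by (simp add: y_def)
    show "0 \<le> p $ i \<and> \<tau> * (p $ i)\<^sup>2 \<le> 2 * lam" if "y $ i = 0" for i
      using that \<Gamma>_iff[of i] \<mu>[of i] tau2_bound[OF tau2 \<open>0 < lam\<close>, of i] \<open>0 < \<tau>\<close> \<open>pstar g A b xs = p\<close>
      by (simp add: \<Gamma>_def p_def)
  qed
  with stationary show ?thesis
    unfolding Pstat_def y_def by blast
qed

theorem theorem3p1:
  fixes f :: "real^'n \<Rightarrow> real" and g :: "real^'n \<Rightarrow> real^'n"
    and g' :: "real^'n \<Rightarrow> real^'n \<Rightarrow> real^'n"
    and lam :: real and A :: "real^'n^'m" and b :: "real^'m"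
  assumes grad: "\<And>x. (f has_derivative (\<lambda>h. g x \<bullet> h)) (at x)"
    and hess: "\<And>x. (g has_derivative g' x) (at x)"
    and hess_cont: "continuous_on UNIV (\<lambda>x. matrix (g' x))"
    and lam: "lam > 0"
  shows
   "(\<forall>xs. local_minimizer (objP f lam A b) xs \<and> full_row_rank_on A (Gam A b xs) \<longrightarrow>
        (\<forall>\<tau>. 0 < \<tau> \<and> ereal \<tau> < min (tau1 lam A b xs) (tau2 g lam A b xs) \<longrightarrow> Pstat g lam A b \<tau> xs))
  \<and> (\<forall>xs \<tau>. \<tau> > 0 \<and> Pstat g lam A b \<tau> xs \<and> (\<exists>\<delta>>0. convex_on (ball xs \<delta>) f)
        \<longrightarrow> local_minimizer (objP f lam A b) xs)
  \<and> (\<forall>cf xs \<tau>. cf > 0 \<and>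
        (\<forall>x x'. f x \<ge> f x' + g x' \<bullet> (x - x') + cf / 2 * (norm (x - x'))\<^sup>2) \<and>
        \<tau> \<ge> (onorm (\<lambda>x. A *v x))\<^sup>2 / cf \<and> Pstat g lam A b \<tau> xs
        \<longrightarrow> global_minimizer (objP f lam A b) xs)"
proof (intro conjI allI impI)
  fix xs \<tau>
  assume "local_minimizer (objP f lam A b) xs \<and> full_row_rank_on A (Gam A b xs)"
    and "0 < \<tau> \<and> ereal \<tau> < min (tau1 lam A b xs) (tau2 g lam A b xs)"
  then show "Pstat g lam A b \<tau> xs"
    using local_minimizer_imp_Pstat[where g = g, OF grad lam] by auto
next
  fix xs \<tau>
  assume "\<tau> > 0 \<and> Pstat g lam A b \<tau> xs \<and> (\<exists>\<delta>>0. convex_on (ball xs \<delta>) f)"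
  then show "local_minimizer (objP f lam A b) xs"
    using Pstat_imp_local_minimizer[where g = g, OF grad lam] by blast
next
  fix cf xs \<tau>
  assume "cf > 0 \<and>
        (\<forall>x x'. f x \<ge> f x' + g x' \<bullet> (x - x') + cf / 2 * (norm (x - x'))\<^sup>2) \<and>
        \<tau> \<ge> (onorm (\<lambda>x. A *v x))\<^sup>2 / cf \<and> Pstat g lam A b \<tau> xs"
  then show "global_minimizer (objP f lam A b) xs"
    using Pstat_imp_global_minimizer by blast
qed

end
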